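(* Let $\delta\ge0$ and define $f^\star_\delta(x,a)=I(\eta_a(x)>T^\star_{\delta,a})+\tau^\star_{\delta,a}I(\eta_a(x)=T^\star_{\delta,a})$ with $$\tau^\star_{\delta,1}=\rho\Big(\frac{\pi^\star_{0,+}-\pi^\star_{1,+}+\widetilde\delta}{\pi^\star_{1,=}}\Big),\qquad \tau^\star_{\delta,0}=\rho\Big(\frac{\pi^\star_{1,+}-\pi^\star_{0,+}-\widetilde\delta}{\pi^\star_{0,=}}\Big).$$ Then: if $D_-(0)>\delta$, $\mathrm{DDP}(f^\star_\delta)=\delta$; if $D_-(0)\le 0$, $\mathrm{DDP}(f^\star_\delta)=0$; and if $0<D_-(0)\le\delta$, $\mathrm{DDP}(f^\star_\delta)=D_-(0)$.
   Context: Let $(X,A,Y)$ be a random vector on $\mathbb{R}^d\times\{0,1\}\times\{0,1\}$ with law $P$; let $p_a=P(A=a)$ with $p_0,p_1>0$; let $P_{X|A=a}$ be the conditional law of $X$ given $A=a$; let $\eta_a(x)=P(Y=1\mid A=a,X=x)$. For a classifier $f:\mathbb{R}^d\times\{0,1\}\to[0,1]$, $\mathrm{DDP}(f)=\int f(x,1)\,dP_{X|A=1}(x)-\int f(x,0)\,dP_{X|A=0}(x)$. For $t\in\mathbb{R}$ define $D_-(t)=P_{X|A=1}\big(\eta_1(X)>\tfrac12+\tfrac{t}{2p_1}\big)-P_{X|A=0}\big(\eta_0(X)\ge\tfrac12-\tfrac{t}{2p_0}\big)$ and $D_+(t)=P_{X|A=1}\big(\eta_1(X)\ge\tfrac12+\tfrac{t}{2p_1}\big)-P_{X|A=0}\big(\eta_0(X)>\tfrac12-\tfrac{t}{2p_0}\big)$.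 For $\delta\ge 0$ let $t^\star_\delta=\inf\{t\in\mathbb{R}:D_-(t)<\delta\}$ if $D_-(0)>\delta$ and $t^\star_\delta=0$ otherwise; $T^\star_{\delta,1}=\tfrac12+\tfrac{t^\star_\delta}{2p_1}$, $T^\star_{\delta,0}=\tfrac12-\tfrac{t^\star_\delta}{2p_0}$. Standing assumption: $D_+(0)\ge -D_-(0)$. Let $\pi^\star_{a,+}=P_{X|A=a}(\eta_a(X)>T^\star_{\delta,a})$, $\pi^\star_{a,=}=P_{X|A=a}(\eta_a(X)=T^\star_{\delta,a})$, $\widetilde\delta=\delta\cdot I(D_-(0)>\delta)$, and $\rho:\mathbb{R}\to[0,1]$, $\rho(x)=0$ for $x\le0$, $\rho(x)=1$ for $x\ge1$, $\rho(x)=x$ otherwise. Convention: $x/0=0$ for all $x\in\mathbb{R}$. *)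

theory Defs
  imports "HOL-Probability.Probability"
begin

(* Group label a \<in> {0,1} is encoded as bool: True = 1, False = 0.
   p a = P(A = a);  M a = P_{X|A=a};  eta a x = P(Y=1 | A=a, X=x). *)

definition Dminus :: "(bool \<Rightarrow> real) \<Rightarrow> (bool \<Rightarrow> 'x measure) \<Rightarrow> (bool \<Rightarrow> 'x \<Rightarrow> real) \<Rightarrow> real \<Rightarrow> real" where
  "Dminus p M eta t =
     measure (M True) {x \<in> space (M True). eta True x > 1/2 + t / (2 * p True)}
   - measure (M False) {x \<in> space (M False). eta False x \<ge> 1/2 - t / (2 * p False)}"

definition Dplus :: "(bool \<Rightarrow> real) \<Rightarrow> (bool \<Rightarrow> 'x measure) \<Rightarrow> (bool \<Rightarrow> 'x \<Rightarrow> real) \<Rightarrow> real \<Rightarrow> real" where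
  "Dplus p M eta t =
     measure (M True) {x \<in> space (M True). eta True x \<ge> 1/2 + t / (2 * p True)}
   - measure (M False) {x \<in> space (M False). eta False x > 1/2 - t / (2 * p False)}"

definition tstar :: "(bool \<Rightarrow> real) \<Rightarrow> (bool \<Rightarrow> 'x measure) \<Rightarrow> (bool \<Rightarrow> 'x \<Rightarrow> real) \<Rightarrow> real \<Rightarrow> real" where
  "tstar p M eta \<delta> =
     (if Dminus p M eta 0 > \<delta> then Inf {t. Dminus p M eta t < \<delta>} else 0)"

definition Tstar :: "(bool \<Rightarrow> real) \<Rightarrow> (bool \<Rightarrow> 'x measure) \<Rightarrow> (bool \<Rightarrow> 'x \<Rightarrow> real) \<Rightarrow> real \<Rightarrow> bool \<Rightarrow> real" where
  "Tstar p M eta \<delta> a =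
     (if a then 1/2 + tstar p M eta \<delta> / (2 * p True)
           else 1/2 - tstar p M eta \<delta> / (2 * p False))"

definition pi_plus :: "(bool \<Rightarrow> real) \<Rightarrow> (bool \<Rightarrow> 'x measure) \<Rightarrow> (bool \<Rightarrow> 'x \<Rightarrow> real) \<Rightarrow> real \<Rightarrow> bool \<Rightarrow> real" where
  "pi_plus p M eta \<delta> a = measure (M a) {x \<in> space (M a). eta a x > Tstar p M eta \<delta> a}"

definition pi_eq :: "(bool \<Rightarrow> real) \<Rightarrow> (bool \<Rightarrow> 'x measure) \<Rightarrow> (bool \<Rightarrow> 'x \<Rightarrow> real) \<Rightarrow> real \<Rightarrow> bool \<Rightarrow> real" where
  "pi_eq p M eta \<delta> a = measure (M a) {x \<in> space (M a). eta a x = Tstar p M eta \<delta> a}"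

definition delta_tilde :: "(bool \<Rightarrow> real) \<Rightarrow> (bool \<Rightarrow> 'x measure) \<Rightarrow> (bool \<Rightarrow> 'x \<Rightarrow> real) \<Rightarrow> real \<Rightarrow> real" where
  "delta_tilde p M eta \<delta> = (if Dminus p M eta 0 > \<delta> then \<delta> else 0)"

definition rho :: "real \<Rightarrow> real" where
  "rho x = (if x \<le> 0 then 0 else if x \<ge> 1 then 1 else x)"

(* note: x / 0 = 0 in Isabelle, matching the paper's convention *)
definition tau_star :: "(bool \<Rightarrow> real) \<Rightarrow> (bool \<Rightarrow> 'x measure) \<Rightarrow> (bool \<Rightarrow> 'x \<Rightarrow> real) \<Rightarrow> real \<Rightarrow> bool \<Rightarrow> real" where
  "tau_star p M eta \<delta> a =
     (if a then rho ((pi_plus p M eta \<delta> False - pi_plus p M eta \<delta> True + delta_tilde p M eta \<delta>)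
                     / pi_eq p M eta \<delta> True)
           else rho ((pi_plus p M eta \<delta> True - pi_plus p M eta \<delta> False - delta_tilde p M eta \<delta>)
                     / pi_eq p M eta \<delta> False))"

definition f_star :: "(bool \<Rightarrow> real) \<Rightarrow> (bool \<Rightarrow> 'x measure) \<Rightarrow> (bool \<Rightarrow> 'x \<Rightarrow> real) \<Rightarrow> real \<Rightarrow> 'x \<Rightarrow> bool \<Rightarrow> real" where
  "f_star p M eta \<delta> x a =
     (if eta a x > Tstar p M eta \<delta> a then 1 else 0)
     + tau_star p M eta \<delta> a * (if eta a x = Tstar p M eta \<delta> a then 1 else 0)"

definition DDP :: "(bool \<Rightarrow> 'x measure) \<Rightarrow> ('x \<Rightarrow> bool \<Rightarrow> real) \<Rightarrow> real" where
  "DDP M f = (\<integral>x. f x True \<partial>M True) - (\<integral>x. f x False \<partial>M False)"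

end

theory Submission
  imports Defs
begin

text \<open>
  Integrating \<open>f\<^sup>\<star>\<^sub>\<delta>\<close> shows that randomising on the tie sets \<open>{\<eta>\<^sub>a = T\<^sup>\<star>\<^sub>\<delta>\<^sub>,\<^sub>a}\<close>
  moves the disparity linearly between \<open>D\<^sub>-(t\<^sup>\<star>)\<close> and \<open>D\<^sub>+(t\<^sup>\<star>)\<close>, so
  \<open>DDP(f\<^sup>\<star>\<^sub>\<delta>)\<close> is \<open>\<delta>\<close>-tilde clamped to \<open>[D\<^sub>-(t\<^sup>\<star>), D\<^sub>+(t\<^sup>\<star>)]\<close>.
  By continuity of measure along monotone families of level sets, \<open>D\<^sub>-\<close> is non-increasing
  and right-continuous, with left limit \<open>D\<^sub>+(t)\<close> at every \<open>t\<close>. Hence at the infimum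
  \<open>t\<^sup>\<star>\<close> of \<open>{D\<^sub>- < \<delta>}\<close> we get \<open>D\<^sub>-(t\<^sup>\<star>) \<le> \<delta> \<le> D\<^sub>+(t\<^sup>\<star>)\<close>, and the clamp returns \<open>\<delta>\<close>.
  If \<open>D\<^sub>-(0) \<le> \<delta>\<close> then \<open>t\<^sup>\<star> = 0\<close> and \<open>\<delta>\<close>-tilde is \<open>0\<close>, and the standing assumption
  \<open>D\<^sub>+(0) \<ge> -D\<^sub>-(0)\<close> decides the clamp.
\<close>

context finite_measure
begin

lemma tendsto_measure_gt_at_right:
  fixes g :: "'a \<Rightarrow> real"
  assumes [measurable]: "g \<in> borel_measurable M"
  shows "((\<lambda>c. measure M {x\<in>space M. c < g x}) \<longlongrightarrow> measure M {x\<in>space M. c0 < g x}) (at_right c0)"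
proof (rule tendsto_at_right_sequentially[of c0 "c0 + 1"])
  fix S :: "nat \<Rightarrow> real"
  assume above: "\<And>n. c0 < S n" and "decseq S" and lim: "S \<longlonglongrightarrow> c0"
  have "(\<lambda>n. measure M {x\<in>space M. S n < g x}) \<longlonglongrightarrow> measure M (\<Union>n. {x\<in>space M. S n < g x})"
    using \<open>decseq S\<close> by (intro finite_Lim_measure_incseq) (auto simp: incseq_def decseq_def intro: le_less_trans)
  also have "(\<Union>n. {x\<in>space M. S n < g x}) = {x\<in>space M. c0 < g x}"
    using above order_tendstoD(2)[OF lim] by (fastforce simp: eventually_sequentially intro: less_trans)
  finally show "(\<lambda>n. measure M {x\<in>space M. S n < g x}) \<longlonglongrightarrow> measure M {x\<in>space M. c0 < g x}" .
qed simp

lemma tendsto_measure_ge_at_right: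
  fixes g :: "'a \<Rightarrow> real"
  assumes [measurable]: "g \<in> borel_measurable M"
  shows "((\<lambda>c. measure M {x\<in>space M. c \<le> g x}) \<longlongrightarrow> measure M {x\<in>space M. c0 < g x}) (at_right c0)"
proof (rule tendsto_at_right_sequentially[of c0 "c0 + 1"])
  fix S :: "nat \<Rightarrow> real"
  assume above: "\<And>n. c0 < S n" and "decseq S" and lim: "S \<longlonglongrightarrow> c0"
  have "(\<lambda>n. measure M {x\<in>space M. S n \<le> g x}) \<longlonglongrightarrow> measure M (\<Union>n. {x\<in>space M. S n \<le> g x})"
    using \<open>decseq S\<close> by (intro finite_Lim_measure_incseq) (auto simp: incseq_def decseq_def intro: order_trans)
  also have "(\<Union>n. {x\<in>space M. S n \<le> g x}) = {x\<in>space M. c0 < g x}"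
    using above order_tendstoD(2)[OF lim] by (fastforce simp: eventually_sequentially intro: less_le_trans less_imp_le)
  finally show "(\<lambda>n. measure M {x\<in>space M. S n \<le> g x}) \<longlonglongrightarrow> measure M {x\<in>space M. c0 < g x}" .
qed simp

lemma tendsto_measure_ge_at_left:
  fixes g :: "'a \<Rightarrow> real"
  assumes [measurable]: "g \<in> borel_measurable M"
  shows "((\<lambda>c. measure M {x\<in>space M. c \<le> g x}) \<longlongrightarrow> measure M {x\<in>space M. c0 \<le> g x}) (at_left c0)"
proof (rule tendsto_at_left_sequentially[of "c0 - 1" c0])
  fix S :: "nat \<Rightarrow> real"
  assume below: "\<And>n. S n < c0" and "incseq S" and lim: "S \<longlonglongrightarrow> c0"
  have "(\<lambda>n. measure M {x\<in>space M. S n \<le> g x}) \<longlonglongrightarrow> measure M (\<Inter>n. {x\<in>space M. S n \<le> g x})"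
    using \<open>incseq S\<close> by (intro finite_Lim_measure_decseq) (auto simp: incseq_def decseq_def intro: order_trans)
  also have "(\<Inter>n. {x\<in>space M. S n \<le> g x}) = {x\<in>space M. c0 \<le> g x}"
  proof (intro equalityI subsetI)
    fix x assume "x \<in> (\<Inter>n. {x\<in>space M. S n \<le> g x})"
    then show "x \<in> {x\<in>space M. c0 \<le> g x}"
      using LIMSEQ_le_const2[OF lim, of "g x"] by (auto intro: less_imp_le)
  next
    fix x assume "x \<in> {x\<in>space M. c0 \<le> g x}"
    then show "x \<in> (\<Inter>n. {x\<in>space M. S n \<le> g x})"
      using below by (auto intro: order.trans[OF less_imp_le])
  qed
  finally show "(\<lambda>n. measure M {x\<in>space M. S n \<le> g x}) \<longlonglongrightarrow> measure M {x\<in>space M. c0 \<le> g x}" .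
qed simp

lemma tendsto_measure_gt_at_left:
  fixes g :: "'a \<Rightarrow> real"
  assumes [measurable]: "g \<in> borel_measurable M"
  shows "((\<lambda>c. measure M {x\<in>space M. c < g x}) \<longlongrightarrow> measure M {x\<in>space M. c0 \<le> g x}) (at_left c0)"
proof (rule tendsto_at_left_sequentially[of "c0 - 1" c0])
  fix S :: "nat \<Rightarrow> real"
  assume below: "\<And>n. S n < c0" and "incseq S" and lim: "S \<longlonglongrightarrow> c0"
  have "(\<lambda>n. measure M {x\<in>space M. S n < g x}) \<longlonglongrightarrow> measure M (\<Inter>n. {x\<in>space M. S n < g x})"
    using \<open>incseq S\<close> by (intro finite_Lim_measure_decseq) (auto simp: incseq_def decseq_def intro: le_less_trans)
  also have "(\<Inter>n. {x\<in>space M. S n < g x}) = {x\<in>space M. c0 \<le> g x}"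
  proof (intro equalityI subsetI)
    fix x assume "x \<in> (\<Inter>n. {x\<in>space M. S n < g x})"
    then show "x \<in> {x\<in>space M. c0 \<le> g x}"
      using LIMSEQ_le_const2[OF lim, of "g x"] by (auto intro: less_imp_le)
  next
    fix x assume "x \<in> {x\<in>space M. c0 \<le> g x}"
    then show "x \<in> (\<Inter>n. {x\<in>space M. S n < g x})"
      using below by (auto intro: order.strict_trans2)
  qed
  finally show "(\<lambda>n. measure M {x\<in>space M. S n < g x}) \<longlonglongrightarrow> measure M {x\<in>space M. c0 \<le> g x}" .
qed simp

lemma measure_ge_eq_measure_gt_plus_measure_eq:
  fixes g :: "'a \<Rightarrow> real"
  assumes [measurable]: "g \<in> borel_measurable M"
  shows "measure M {x\<in>space M. c \<le> g x} = measure M {x\<in>space M. c < g x} + measure M {x\<in>space M. g x = c}"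
proof -
  have "{x\<in>space M. c \<le> g x} = {x\<in>space M. c < g x} \<union> {x\<in>space M. g x = c}" by auto
  also have "measure M \<dots> = measure M {x\<in>space M. c < g x} + measure M {x\<in>space M. g x = c}"
    by (rule finite_measure_Union) auto
  finally show ?thesis .
qed

end

lemma filterlim_affine_at_one_side:
  fixes a k x :: real
  assumes "k > 0"
  shows "filterlim (\<lambda>t. a + t / k) (at_right (a + x / k)) (at_right x)"
    and "filterlim (\<lambda>t. a - t / k) (at_left (a - x / k)) (at_right x)"
    and "filterlim (\<lambda>t. a - t / k) (at_right (a - x / k)) (at_left x)"
    and "filterlim (\<lambda>t. a + t / k) (at_left (a + x / k)) (at_left x)"
proof -
  have right: "\<forall>\<^sub>F t in at_right x. x < t" and left: "\<forall>\<^sub>F t in at_left x. t < x"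
    by (simp_all add: eventually_at_filter)
  show "filterlim (\<lambda>t. a + t / k) (at_right (a + x / k)) (at_right x)"
  proof (rule tendsto_imp_filterlim_at_right)
    show "((\<lambda>t. a + t / k) \<longlongrightarrow> a + x / k) (at_right x)"
      using assms by (intro tendsto_add tendsto_const tendsto_divide tendsto_ident_at) auto
    show "\<forall>\<^sub>F t in at_right x. a + x / k < a + t / k"
      using right by eventually_elim (use assms in \<open>simp add: field_simps\<close>)
  qed
  show "filterlim (\<lambda>t. a - t / k) (at_left (a - x / k)) (at_right x)"
  proof (rule tendsto_imp_filterlim_at_left)
    show "((\<lambda>t. a - t / k) \<longlongrightarrow> a - x / k) (at_right x)"
      using assms by (intro tendsto_diff tendsto_const tendsto_divide tendsto_ident_at) auto
    show "\<forall>\<^sub>F t in at_right x. a - t / k < a - x / k"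
      using right by eventually_elim (use assms in \<open>simp add: field_simps\<close>)
  qed
  show "filterlim (\<lambda>t. a - t / k) (at_right (a - x / k)) (at_left x)"
  proof (rule tendsto_imp_filterlim_at_right)
    show "((\<lambda>t. a - t / k) \<longlongrightarrow> a - x / k) (at_left x)"
      using assms by (intro tendsto_diff tendsto_const tendsto_divide tendsto_ident_at) auto
    show "\<forall>\<^sub>F t in at_left x. a - x / k < a - t / k"
      using left by eventually_elim (use assms in \<open>simp add: field_simps\<close>)
  qed
  show "filterlim (\<lambda>t. a + t / k) (at_left (a + x / k)) (at_left x)"
  proof (rule tendsto_imp_filterlim_at_left)
    show "((\<lambda>t. a + t / k) \<longlongrightarrow> a + x / k) (at_left x)"
      using assms by (intro tendsto_add tendsto_const tendsto_divide tendsto_ident_at) auto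
    show "\<forall>\<^sub>F t in at_left x. a + t / k < a + x / k"
      using left by eventually_elim (use assms in \<open>simp add: field_simps\<close>)
  qed
qed

lemma rho_divide_mult:
  assumes "q \<ge> 0"
  shows "rho (z / q) * q = max 0 (min z q)"
proof (cases "q = 0")
  case False
  with assms have q: "q > 0" by simp
  consider "z \<le> 0" | "0 < z" "z < q" | "q \<le> z" by linarith
  then show ?thesis
  proof cases
    case 1
    then show ?thesis using q by (simp add: rho_def divide_nonpos_pos)
  next
    case 2
    then show ?thesis using q by (simp add: rho_def field_simps)
  next
    case 3
    then show ?thesis using q by (simp add: rho_def field_simps)
  qed
qed simp

locale fair_classification_model =
  fixes p :: "bool \<Rightarrow> real" and M :: "bool \<Rightarrow> 'x measure" and eta :: "bool \<Rightarrow> 'x \<Rightarrow> real"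
  assumes prob_space_M: "prob_space (M a)"
    and eta_measurable [measurable]: "eta a \<in> borel_measurable (M a)"
    and eta_nonneg: "0 \<le> eta a x"
    and eta_le_1: "eta a x \<le> 1"
    and p_pos: "p a > 0"
begin

lemma finite_measure_M: "finite_measure (M a)"
  using prob_space_M by (rule prob_space.finite_measure)

lemma Dminus_antimono:
  assumes "t \<le> t'"
  shows "Dminus p M eta t' \<le> Dminus p M eta t"
proof -
  have "1/2 + t / (2 * p True) \<le> 1/2 + t' / (2 * p True)"
    and "1/2 - t' / (2 * p False) \<le> 1/2 - t / (2 * p False)"
    using assms p_pos[of True] p_pos[of False] by (simp_all add: divide_right_mono)
  then have "measure (M True) {x\<in>space (M True). 1/2 + t' / (2 * p True) < eta True x}
               \<le> measure (M True) {x\<in>space (M True). 1/2 + t / (2 * p True) < eta True x}"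
    and "measure (M False) {x\<in>space (M False). 1/2 - t / (2 * p False) \<le> eta False x}
               \<le> measure (M False) {x\<in>space (M False). 1/2 - t' / (2 * p False) \<le> eta False x}"
    by (auto intro!: finite_measure.finite_measure_mono[OF finite_measure_M])
  then show ?thesis unfolding Dminus_def by linarith
qed

text \<open>At \<open>t = max p\<^sub>1 p\<^sub>0\<close> both thresholds leave \<open>[0, 1]\<close>.\<close>

lemma Dminus_eq_minus_one: "Dminus p M eta (max (p True) (p False)) = -1"
proof -
  let ?m = "max (p True) (p False)"
  have "1 \<le> 1/2 + ?m / (2 * p True)" and "1/2 - ?m / (2 * p False) \<le> 0"
    using p_pos[of True] p_pos[of False] by (simp_all add: field_simps)
  then have "\<not> 1/2 + ?m / (2 * p True) < eta True x" and "1/2 - ?m / (2 * p False) \<le> eta False x" for x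
    using eta_le_1[of True x] eta_nonneg[of False x] by linarith+
  then have none: "{x\<in>space (M True). 1/2 + ?m / (2 * p True) < eta True x} = {}"
    and all: "{x\<in>space (M False). 1/2 - ?m / (2 * p False) \<le> eta False x} = space (M False)"
    by auto
  show ?thesis
    unfolding Dminus_def none all by (simp add: prob_space.prob_space[OF prob_space_M])
qed

lemma Dminus_tendsto_at_right: "(Dminus p M eta \<longlongrightarrow> Dminus p M eta t) (at_right t)"
proof -
  have "((\<lambda>s. measure (M True) {x\<in>space (M True). 1/2 + s / (2 * p True) < eta True x})
          \<longlongrightarrow> measure (M True) {x\<in>space (M True). 1/2 + t / (2 * p True) < eta True x}) (at_right t)"
    by (rule filterlim_compose[OF finite_measure.tendsto_measure_gt_at_right[OF finite_measure_M]
          filterlim_affine_at_one_side(1)]) (simp_all add: p_pos)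
  moreover have "((\<lambda>s. measure (M False) {x\<in>space (M False). 1/2 - s / (2 * p False) \<le> eta False x})
          \<longlongrightarrow> measure (M False) {x\<in>space (M False). 1/2 - t / (2 * p False) \<le> eta False x}) (at_right t)"
    by (rule filterlim_compose[OF finite_measure.tendsto_measure_ge_at_left[OF finite_measure_M]
          filterlim_affine_at_one_side(2)]) (simp_all add: p_pos)
  ultimately show ?thesis
    unfolding Dminus_def[abs_def] by (rule tendsto_diff)
qed

lemma Dminus_tendsto_Dplus_at_left: "(Dminus p M eta \<longlongrightarrow> Dplus p M eta t) (at_left t)"
proof -
  have "((\<lambda>s. measure (M True) {x\<in>space (M True). 1/2 + s / (2 * p True) < eta True x})
          \<longlongrightarrow> measure (M True) {x\<in>space (M True). 1/2 + t / (2 * p True) \<le> eta True x}) (at_left t)"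
    by (rule filterlim_compose[OF finite_measure.tendsto_measure_gt_at_left[OF finite_measure_M]
          filterlim_affine_at_one_side(4)]) (simp_all add: p_pos)
  moreover have "((\<lambda>s. measure (M False) {x\<in>space (M False). 1/2 - s / (2 * p False) \<le> eta False x})
          \<longlongrightarrow> measure (M False) {x\<in>space (M False). 1/2 - t / (2 * p False) < eta False x}) (at_left t)"
    by (rule filterlim_compose[OF finite_measure.tendsto_measure_ge_at_right[OF finite_measure_M]
          filterlim_affine_at_one_side(3)]) (simp_all add: p_pos)
  ultimately show ?thesis
    unfolding Dminus_def[abs_def] Dplus_def by (rule tendsto_diff)
qed

lemma tstar_bounds:
  assumes "0 \<le> \<delta>" and "\<delta> < Dminus p M eta 0"
  shows Dminus_tstar_le: "Dminus p M eta (tstar p M eta \<delta>) \<le> \<delta>"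
    and Dplus_tstar_ge: "\<delta> \<le> Dplus p M eta (tstar p M eta \<delta>)"
proof -
  define S where "S = {t. Dminus p M eta t < \<delta>}"
  have tstar_eq: "tstar p M eta \<delta> = Inf S"
    using assms(2) by (simp add: tstar_def S_def)
  have "max (p True) (p False) \<in> S"
    using assms(1) by (simp add: S_def Dminus_eq_minus_one)
  then have "S \<noteq> {}" by blast
  have "0 \<le> t" if "t \<in> S" for t
  proof (rule ccontr)
    assume "\<not> 0 \<le> t"
    with that assms(2) Dminus_antimono[of t 0] show False by (simp add: S_def)
  qed
  then have "bdd_below S" by (rule bdd_belowI)
  have "\<forall>\<^sub>F t in at_right (tstar p M eta \<delta>). Dminus p M eta t \<le> \<delta>"
    using eventually_at_right_less
  proof eventually_elim
    case (elim t)
    then obtain s where "s \<in> S" "s < t"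
      using cInf_lessD[OF \<open>S \<noteq> {}\<close>] tstar_eq by auto
    then show ?case using Dminus_antimono[of s t] by (simp add: S_def)
  qed
  then show "Dminus p M eta (tstar p M eta \<delta>) \<le> \<delta>"
    by (intro tendsto_upperbound[OF Dminus_tendsto_at_right]) simp_all
  have "\<forall>\<^sub>F t in at_left (tstar p M eta \<delta>). t < tstar p M eta \<delta>"
    by (simp add: eventually_at_filter)
  then have "\<forall>\<^sub>F t in at_left (tstar p M eta \<delta>). \<delta> \<le> Dminus p M eta t"
  proof eventually_elim
    case (elim t)
    then have "t \<notin> S"
      using cInf_lower[OF _ \<open>bdd_below S\<close>] tstar_eq by force
    then show ?case by (simp add: S_def)
  qed
  then show "\<delta> \<le> Dplus p M eta (tstar p M eta \<delta>)"
    by (intro tendsto_lowerbound[OF Dminus_tendsto_Dplus_at_left]) simp_all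
qed

lemma Dminus_tstar_eq:
  "Dminus p M eta (tstar p M eta \<delta>)
     = pi_plus p M eta \<delta> True - pi_plus p M eta \<delta> False - pi_eq p M eta \<delta> False"
  by (simp add: Dminus_def pi_plus_def pi_eq_def Tstar_def
      finite_measure.measure_ge_eq_measure_gt_plus_measure_eq[OF finite_measure_M])

lemma Dplus_tstar_eq:
  "Dplus p M eta (tstar p M eta \<delta>)
     = pi_plus p M eta \<delta> True + pi_eq p M eta \<delta> True - pi_plus p M eta \<delta> False"
  by (simp add: Dplus_def pi_plus_def pi_eq_def Tstar_def
      finite_measure.measure_ge_eq_measure_gt_plus_measure_eq[OF finite_measure_M])

lemma integral_f_star:
  "(\<integral>x. f_star p M eta \<delta> x a \<partial>M a) = pi_plus p M eta \<delta> a + tau_star p M eta \<delta> a * pi_eq p M eta \<delta> a"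
proof -
  interpret finite_measure "M a" by (rule finite_measure_M)
  define T where "T = Tstar p M eta \<delta> a"
  define A where "A = {x\<in>space (M a). T < eta a x}"
  define B where "B = {x\<in>space (M a). eta a x = T}"
  have [measurable]: "A \<in> sets (M a)" "B \<in> sets (M a)"
    unfolding A_def B_def by measurable
  have "(\<integral>x. f_star p M eta \<delta> x a \<partial>M a)
          = (\<integral>x. indicator A x + tau_star p M eta \<delta> a * indicator B x \<partial>M a)"
    by (rule Bochner_Integration.integral_cong) (auto simp: f_star_def A_def B_def T_def indicator_def)
  also have "\<dots> = measure (M a) A + tau_star p M eta \<delta> a * measure (M a) B"
    by (simp add: emeasure_finite less_top[symmetric])
  finally show ?thesis
    unfolding pi_plus_def pi_eq_def A_def B_def T_def .
qed

lemma DDP_f_star: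
  "DDP M (f_star p M eta \<delta>)
     = max (Dminus p M eta (tstar p M eta \<delta>))
           (min (delta_tilde p M eta \<delta>) (Dplus p M eta (tstar p M eta \<delta>)))"
proof -
  define q where "q = pi_plus p M eta \<delta>"
  define e where "e = pi_eq p M eta \<delta>"
  define d where "d = delta_tilde p M eta \<delta>"
  have e_nonneg: "0 \<le> e a" for a by (simp add: e_def pi_eq_def)
  have "DDP M (f_star p M eta \<delta>)
          = q True + rho ((q False - q True + d) / e True) * e True
            - (q False + rho ((q True - q False - d) / e False) * e False)"
    by (simp add: DDP_def integral_f_star tau_star_def q_def e_def d_def mult.commute)
  also have "\<dots> = q True + max 0 (min (q False - q True + d) (e True))
                  - (q False + max 0 (min (q True - q False - d) (e False)))"
    by (simp add: rho_divide_mult e_nonneg)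
  also have "\<dots> = max (q True - q False - e False) (min d (q True + e True - q False))"
    using e_nonneg[of True] e_nonneg[of False] by (auto simp: max_def min_def)
  finally show ?thesis
    by (simp add: Dminus_tstar_eq Dplus_tstar_eq q_def e_def d_def)
qed

end

theorem proposition5p1:
  fixes p :: "bool \<Rightarrow> real"
    and M :: "bool \<Rightarrow> ('x::euclidean_space) measure"
    and eta :: "bool \<Rightarrow> 'x \<Rightarrow> real"
    and \<delta> :: real
  assumes prob: "\<And>a. prob_space (M a)"
    and sets_M: "\<And>a. sets (M a) = sets borel"
    and eta_meas: "\<And>a. eta a \<in> borel_measurable borel"
    and eta_range: "\<And>a x. 0 \<le> eta a x \<and> eta a x \<le> 1"
    and p_pos: "\<And>a. p a > 0"
    and "p True + p False = 1"
    and standing: "Dplus p M eta 0 \<ge> - Dminus p M eta 0"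
    and delta_nonneg: "\<delta> \<ge> 0"
  shows "(Dminus p M eta 0 > \<delta> \<longrightarrow> DDP M (f_star p M eta \<delta>) = \<delta>)
       \<and> (Dminus p M eta 0 \<le> 0 \<longrightarrow> DDP M (f_star p M eta \<delta>) = 0)
       \<and> (0 < Dminus p M eta 0 \<and> Dminus p M eta 0 \<le> \<delta> \<longrightarrow> DDP M (f_star p M eta \<delta>) = Dminus p M eta 0)"
proof -
  have "eta a \<in> borel_measurable (M a)" for a
    by (subst measurable_cong_sets[OF sets_M refl]) (rule eta_meas)
  with prob eta_range p_pos interpret fair_classification_model p M eta
    by (intro fair_classification_model.intro) simp_all
  show ?thesis
  proof (cases "\<delta> < Dminus p M eta 0")
    case True
    then have "DDP M (f_star p M eta \<delta>)
                 = max (Dminus p M eta (tstar p M eta \<delta>)) (min \<delta> (Dplus p M eta (tstar p M eta \<delta>)))"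
      by (simp add: DDP_f_star delta_tilde_def)
    also have "\<dots> = \<delta>"
      using tstar_bounds[OF delta_nonneg True] by simp
    finally show ?thesis using True delta_nonneg by auto
  next
    case False
    then have "tstar p M eta \<delta> = 0" and "delta_tilde p M eta \<delta> = 0"
      by (simp_all add: tstar_def delta_tilde_def)
    then have "DDP M (f_star p M eta \<delta>) = max (Dminus p M eta 0) (min 0 (Dplus p M eta 0))"
      by (simp add: DDP_f_star)
    with False standing show ?thesis
      by (auto simp: max_def min_def)
  qed
qed

end
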